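(* Let $(m,Q)$ be a deformation pair of the lattice polytope $P$. Then the map $\xi_{(m,Q)}:\widetilde M\to\widetilde M$, $\xi_{(m,Q)}(h)=h-\eta_Q(\pi_M(h))\,m$, maps the monoid $S_P$ bijectively onto the monoid $S_{P_{(m,Q)}}$, with inverse $\xi_{(-m,Q)}$.
   Context: $N\cong\mathbb{Z}^n$, $M$ dual, $\widetilde M=M\oplus\mathbb{Z}$ with projections $\pi_M,\pi_{\mathbb{Z}}$. For a lattice polytope $P$: $\sigma$ the cone generated by $\{(v,1):v\in P\}$, $S_P=\sigma^\vee\cap\widetilde M$. For a polytope $Q$ and $c\in M$, $\eta_Q(c)=-\min_{v\in Q}\langle v,c\rangle$. $\varphi_m(n)=\langle\pi_M(m),n\rangle+\pi_{\mathbb{Z}}(m)$. A deformation pair $(m,Q)$ of $P$: $m\in\widetilde M$, $Q\subset\{n:\langle\pi_M(m),n\rangle=0\}$ a lattice polytope such that $iQ$ is a Minkowski summand of $P\cap(\varphi_m=i)$ for all $i\in\mathbb{N}$ with nonempty slice. Laurent polynomials are normalized (coefficient $1$ at vertices of the Newton polytope $\Delta$); $f$ is $(m,g)$-mutable if $f=\sum_if_i$ with $f_i$ supported on $(\varphi_m=i)\cap N$ and $g^i\mid f_i$ for $i\ge0$, and $\operatorname{mut}^g_mf=\sum_if_i/g^i$. $P_{(m,Q)}:=\Delta(\operatorname{mut}^g_mf)$ for any $f,g$ with $\Delta(f)=P$, $\Delta(g)=Q$, $f$ $(m,g)$-mutable (such exist and the result does not depend on the choice). *)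

theory Defs
  imports "HOL-Analysis.Analysis"
begin

text \<open>N = Z^n is the integer lattice inside real^'n; M is identified with the same
 lattice (pairing = inner product); Mtilde = M x Z inside real^'n x real.\<close>

definition lattice :: "(real^'n) set" where
  "lattice = {v. \<forall>i. v $ i \<in> \<int>}"

definition Mtilde :: "((real^'n) \<times> real) set" where
  "Mtilde = {h. fst h \<in> lattice \<and> snd h \<in> \<int>}"

definition polytope :: "(real^'n) set \<Rightarrow> bool" where
  "polytope P \<longleftrightarrow> (\<exists>V. finite V \<and> V \<noteq> {} \<and> P = convex hull V)"

definition lattice_polytope :: "(real^'n) set \<Rightarrow> bool" where
  "lattice_polytope P \<longleftrightarrow> (\<exists>V. finite V \<and> V \<noteq> {} \<and> V \<subseteq> lattice \<and> P = convex hull V)"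

definition cone_over :: "(real^'n) set \<Rightarrow> ((real^'n) \<times> real) set" where
  "cone_over P = convex_cone hull ((\<lambda>v. (v, 1::real)) ` P)"

definition S_monoid :: "(real^'n) set \<Rightarrow> ((real^'n) \<times> real) set" where
  "S_monoid P = {h \<in> Mtilde. \<forall>w \<in> cone_over P. 0 \<le> h \<bullet> w}"

definition eta :: "(real^'n) set \<Rightarrow> real^'n \<Rightarrow> real" where
  "eta Q c = - Inf ((\<lambda>v. v \<bullet> c) ` Q)"

definition xi :: "(real^'n) \<times> real \<Rightarrow> (real^'n) set \<Rightarrow> (real^'n) \<times> real \<Rightarrow> (real^'n) \<times> real" where
  "xi m Q h = h - eta Q (fst h) *\<^sub>R m"

definition phi :: "(real^'n) \<times> real \<Rightarrow> real^'n \<Rightarrow> real" where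
  "phi m x = fst m \<bullet> x + snd m"

definition minkowski_sum :: "(real^'n) set \<Rightarrow> (real^'n) set \<Rightarrow> (real^'n) set" where
  "minkowski_sum A B = {a + b | a b. a \<in> A \<and> b \<in> B}"

definition deformation_pair :: "(real^'n) set \<Rightarrow> (real^'n) \<times> real \<Rightarrow> (real^'n) set \<Rightarrow> bool" where
  "deformation_pair P m Q \<longleftrightarrow>
     m \<in> Mtilde \<and> lattice_polytope Q \<and> Q \<subseteq> {x. fst m \<bullet> x = 0} \<and>
     (\<forall>i::nat. P \<inter> {x. phi m x = real i} \<noteq> {} \<longrightarrow>
        (\<exists>R. polytope R \<and>
             P \<inter> {x. phi m x = real i} = minkowski_sum ((\<lambda>x. real i *\<^sub>R x) ` Q) R))"

text \<open>Laurent polynomials in n variables with complex coefficients: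
 finitely supported functions on the lattice.\<close>

definition supp :: "(real^'n \<Rightarrow> complex) \<Rightarrow> (real^'n) set" where
  "supp f = {x. f x \<noteq> 0}"

definition laurent :: "(real^'n \<Rightarrow> complex) \<Rightarrow> bool" where
  "laurent f \<longleftrightarrow> finite (supp f) \<and> supp f \<subseteq> lattice"

definition newton :: "(real^'n \<Rightarrow> complex) \<Rightarrow> (real^'n) set" where
  "newton f = convex hull (supp f)"

definition normalized :: "(real^'n \<Rightarrow> complex) \<Rightarrow> bool" where
  "normalized f \<longleftrightarrow> laurent f \<and> (\<forall>v. v extreme_point_of newton f \<longrightarrow> f v = 1)"

definition lmult :: "(real^'n \<Rightarrow> complex) \<Rightarrow> (real^'n \<Rightarrow> complex) \<Rightarrow> (real^'n \<Rightarrow> complex)" where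
  "lmult f g = (\<lambda>x. \<Sum>y\<in>supp f. f y * g (x - y))"

definition lpow :: "(real^'n \<Rightarrow> complex) \<Rightarrow> nat \<Rightarrow> (real^'n \<Rightarrow> complex)" where
  "lpow g k = (lmult g ^^ k) (\<lambda>x. if x = 0 then 1 else 0)"

definition slice :: "(real^'n) \<times> real \<Rightarrow> (real^'n \<Rightarrow> complex) \<Rightarrow> int \<Rightarrow> (real^'n \<Rightarrow> complex)" where
  "slice m f i = (\<lambda>x. if phi m x = real_of_int i then f x else 0)"

definition mutable :: "(real^'n) \<times> real \<Rightarrow> (real^'n \<Rightarrow> complex) \<Rightarrow> (real^'n \<Rightarrow> complex) \<Rightarrow> bool" where
  "mutable m g f \<longleftrightarrow> laurent f \<and>
     (\<forall>i::nat. \<exists>h. laurent h \<and> lmult h (lpow g i) = slice m f (int i))"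

definition ldiv_slice :: "(real^'n) \<times> real \<Rightarrow> (real^'n \<Rightarrow> complex) \<Rightarrow> (real^'n \<Rightarrow> complex) \<Rightarrow> int \<Rightarrow> (real^'n \<Rightarrow> complex)" where
  "ldiv_slice m g f i =
     (if 0 \<le> i then (THE h. laurent h \<and> lmult h (lpow g (nat i)) = slice m f i)
      else lmult (slice m f i) (lpow g (nat (- i))))"

definition mut :: "(real^'n) \<times> real \<Rightarrow> (real^'n \<Rightarrow> complex) \<Rightarrow> (real^'n \<Rightarrow> complex) \<Rightarrow> (real^'n \<Rightarrow> complex)" where
  "mut m g f = (\<lambda>x. \<Sum>i\<in>{i::int. \<exists>y\<in>supp f. phi m y = real_of_int i}. ldiv_slice m g f i x)"

text \<open>P_(m,Q) = Newton polytope of mut^g_m f for (any) suitable f, g.\<close>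
definition P_mut :: "(real^'n) set \<Rightarrow> (real^'n) \<times> real \<Rightarrow> (real^'n) set \<Rightarrow> (real^'n) set" where
  "P_mut P m Q = (SOME R. \<exists>f g. normalized f \<and> normalized g \<and> newton f = P \<and> newton g = Q \<and>
                     mutable m g f \<and> R = newton (mut m g f))"

end

theory Submission
  imports Defs
begin

(*
  For h = (c, s) in Mtilde, h lies in S_P iff c.v + s >= 0 at every vertex of P, i.e. on the support
  of any Laurent polynomial f with Newton polytope P.  Mutation acts slice by slice: on the slice
  phi_m = i, the part f_i of f is (mut f)_i * g^i (for i < 0 the roles of f_i and (mut f)_i are
  exchanged).  Extremal terms of a product cannot cancel, so the minimum of a linear form c on the
  support of a product is the sum of the minima on the supports of the factors; on the support of
  g^i it is i * min_Q c = - i * eta_Q(c).  Hence c.v + s >= 0 on the support of f_i iff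
  c.v + s - i * eta_Q(c) >= 0 on the support of (mut f)_i, and the latter is the pairing of xi(h) with
  (v, 1) because phi_m(v) = i there.  Since pi_M(m) vanishes on Q, xi does not change eta_Q, so
  xi_(-m,Q) inverts xi_(m,Q).

  As P_(m,Q) is defined by choice, a suitable pair (f, g) has to be exhibited: g is the indicator of
  the vertices of Q, and f is glued from its slices, which are sums of monomials x^r times g^k, one
  for each vertex e = k q + r of P split according to the Minkowski decomposition of its slice.
*)

section \<open>Lattice points and Laurent polynomials\<close>

lemma lattice_add: "a \<in> lattice \<Longrightarrow> b \<in> lattice \<Longrightarrow> a + b \<in> lattice"
  by (auto simp: lattice_def)

lemma lattice_diff: "a \<in> lattice \<Longrightarrow> b \<in> lattice \<Longrightarrow> a - b \<in> lattice"
  by (auto simp: lattice_def)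

lemma lattice_scaleR: "k \<in> \<int> \<Longrightarrow> a \<in> lattice \<Longrightarrow> k *\<^sub>R a \<in> lattice"
  by (auto simp: lattice_def)

lemma lattice_inner_Ints: "a \<in> lattice \<Longrightarrow> b \<in> lattice \<Longrightarrow> a \<bullet> b \<in> \<int>"
  unfolding lattice_def inner_vec_def by (auto intro!: Ints_sum)

lemma phi_Ints: "m \<in> Mtilde \<Longrightarrow> x \<in> lattice \<Longrightarrow> phi m x \<in> \<int>"
  by (auto simp: Mtilde_def phi_def intro!: Ints_add lattice_inner_Ints)

lemma uminus_Mtilde: "m \<in> Mtilde \<Longrightarrow> - m \<in> Mtilde"
  by (auto simp: Mtilde_def lattice_def)

lemma finite_has_minimizer:
  fixes f :: "'a \<Rightarrow> 'b::linorder"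
  assumes "finite S" "S \<noteq> {}"
  shows "\<exists>x\<in>S. \<forall>y\<in>S. f x \<le> f y"
  using ex_is_arg_min_if_finite[OF assms, of f] by (auto simp: is_arg_min_linorder)

lemma supp_of_bool [simp]: "supp (\<lambda>x. of_bool (x \<in> V)) = V"
  by (auto simp: supp_def)

lemma normalized_of_bool: "finite V \<Longrightarrow> V \<subseteq> lattice \<Longrightarrow> normalized (\<lambda>x. of_bool (x \<in> V))"
  unfolding normalized_def laurent_def newton_def by (auto dest: extreme_point_of_convex_hull)

lemma supp_lmult_subset: "supp (lmult a b) \<subseteq> {y + z |y z. y \<in> supp a \<and> z \<in> supp b}"
proof
  fix x assume "x \<in> supp (lmult a b)"
  then have "(\<Sum>y\<in>supp a. a y * b (x - y)) \<noteq> 0" by (simp add: supp_def lmult_def)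
  then obtain y where "y \<in> supp a" "a y * b (x - y) \<noteq> 0" by (meson sum.neutral)
  then show "x \<in> {y + z |y z. y \<in> supp a \<and> z \<in> supp b}"
    by (intro CollectI exI[of _ y] exI[of _ "x - y"]) (auto simp: supp_def)
qed

lemma laurent_lmult:
  assumes "laurent a" "laurent b"
  shows "laurent (lmult a b)"
proof -
  have "{y + z |y z. y \<in> supp a \<and> z \<in> supp b} = (\<lambda>(y, z). y + z) ` (supp a \<times> supp b)"
    by auto
  then have "finite {y + z |y z. y \<in> supp a \<and> z \<in> supp b}"
    using assms by (simp add: laurent_def)
  moreover have "{y + z |y z. y \<in> supp a \<and> z \<in> supp b} \<subseteq> lattice"
    using assms by (auto simp: laurent_def intro!: lattice_add)
  ultimately show ?thesis
    using supp_lmult_subset[of a b] unfolding laurent_def by (meson finite_subset order_trans)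
qed

lemma lmult_diff_left:
  assumes "laurent a1" "laurent a2"
  shows "lmult (\<lambda>x. a1 x - a2 x) b = (\<lambda>x. lmult a1 b x - lmult a2 b x)"
proof
  fix x
  let ?S = "supp a1 \<union> supp a2"
  have "finite ?S" using assms by (simp add: laurent_def)
  have sum_over_S: "lmult a b x = (\<Sum>y\<in>?S. a y * b (x - y))" if "supp a \<subseteq> ?S" for a
    unfolding lmult_def
    by (rule sum.mono_neutral_left) (use \<open>finite ?S\<close> that in \<open>auto simp: supp_def\<close>)
  have "supp (\<lambda>x. a1 x - a2 x) \<subseteq> ?S" by (auto simp: supp_def)
  then show "lmult (\<lambda>x. a1 x - a2 x) b x = lmult a1 b x - lmult a2 b x"
    by (simp add: sum_over_S left_diff_distrib sum_subtractf)
qed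

lemma lmult_zero_left [simp]: "lmult (\<lambda>_. 0) b = (\<lambda>_. 0)"
  by (simp add: lmult_def supp_def)

lemma lmult_single_term:
  assumes "finite (supp a)" "y0 \<in> supp a"
    and "\<And>y. y \<in> supp a \<Longrightarrow> b (x - y) \<noteq> 0 \<Longrightarrow> y = y0"
  shows "lmult a b x = a y0 * b (x - y0)"
  unfolding lmult_def
  by (rule sum.remove[of _ y0, THEN trans]) (use assms in \<open>auto intro!: sum.neutral\<close>)

lemma lpow_0 [simp]: "lpow g 0 = (\<lambda>x. if x = 0 then 1 else 0)"
  by (simp add: lpow_def)

lemma lpow_Suc: "lpow g (Suc k) = lmult g (lpow g k)"
  by (simp add: lpow_def)

lemma laurent_lpow: "laurent g \<Longrightarrow> laurent (lpow g k)"
proof (induction k)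
  case 0
  then show ?case by (auto simp: laurent_def supp_def lattice_def)
next
  case (Suc k)
  then show ?case by (simp add: lpow_Suc laurent_lmult)
qed

lemma lmult_extremal_term:
  assumes "laurent a" "laurent b" "supp a \<noteq> {}" "supp b \<noteq> {}"
  obtains a0 b0 where "a0 \<in> supp a" "b0 \<in> supp b" "a0 + b0 \<in> supp (lmult a b)"
    "\<forall>y\<in>supp a. c \<bullet> a0 \<le> c \<bullet> y" "\<forall>z\<in>supp b. c \<bullet> b0 \<le> c \<bullet> z"
proof -
  define A where "A = {y \<in> supp a. \<forall>y'\<in>supp a. c \<bullet> y \<le> c \<bullet> y'}"
  define B where "B = {z \<in> supp b. \<forall>z'\<in>supp b. c \<bullet> z \<le> c \<bullet> z'}"
  have fin: "finite (supp a)" "finite (supp b)" using assms(1,2) by (auto simp: laurent_def)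
  have "A \<noteq> {}" "B \<noteq> {}"
    using finite_has_minimizer[OF fin(1) assms(3), of "(\<bullet>) c"]
      finite_has_minimizer[OF fin(2) assms(4), of "(\<bullet>) c"] unfolding A_def B_def by blast+
  moreover have "finite (A \<times> B)" using fin by (auto simp: A_def B_def)
  \<comment> \<open>Among the pairs of minimal terms take one whose sum has maximal norm: by the parallelogram
      law no other pair of minimal terms can produce the same monomial, so this term cannot cancel.\<close>
  ultimately obtain p where p: "p \<in> A \<times> B"
    and p_max: "\<And>p'. p' \<in> A \<times> B \<Longrightarrow> norm (fst p' + snd p') ^ 2 \<le> norm (fst p + snd p) ^ 2"
    using finite_has_minimizer[of "A \<times> B" "\<lambda>p. - (norm (fst p + snd p) ^ 2)"] by force
  obtain a0 b0 where ab: "p = (a0, b0)" "a0 \<in> A" "b0 \<in> B" using p by (cases p) auto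
  have unique: "y = a0" if y: "y \<in> supp a" and nz: "b (a0 + b0 - y) \<noteq> 0" for y
  proof -
    define z where "z = a0 + b0 - y"
    have z: "z \<in> supp b" using nz by (simp add: z_def supp_def)
    have "c \<bullet> a0 \<le> c \<bullet> y" "c \<bullet> b0 \<le> c \<bullet> z" using ab y z by (auto simp: A_def B_def)
    moreover have "c \<bullet> y + c \<bullet> z = c \<bullet> a0 + c \<bullet> b0"
      by (simp add: z_def inner_diff_right inner_add_right)
    ultimately have "c \<bullet> y = c \<bullet> a0" "c \<bullet> z = c \<bullet> b0" by linarith+
    then have "(y, b0) \<in> A \<times> B" "(a0, z) \<in> A \<times> B" using ab y z by (auto simp: A_def B_def)
    define d where "d = y - a0"
    have "y + b0 = (a0 + b0) + d" "a0 + z = (a0 + b0) - d" by (simp_all add: d_def z_def)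
    with p_max[OF \<open>(y, b0) \<in> A \<times> B\<close>] p_max[OF \<open>(a0, z) \<in> A \<times> B\<close>]
    have "norm ((a0 + b0) + d) ^ 2 \<le> norm (a0 + b0) ^ 2" "norm ((a0 + b0) - d) ^ 2 \<le> norm (a0 + b0) ^ 2"
      by (simp_all add: ab(1))
    moreover have "norm ((a0 + b0) + d) ^ 2 + norm ((a0 + b0) - d) ^ 2
        = 2 * norm (a0 + b0) ^ 2 + 2 * norm d ^ 2"
      by (simp add: power2_norm_eq_inner inner_add_left inner_add_right inner_diff_left
          inner_diff_right inner_commute)
    ultimately have "norm d ^ 2 \<le> 0" by linarith
    then show ?thesis by (simp add: d_def)
  qed
  have "lmult a b (a0 + b0) = a a0 * b b0"
    using lmult_single_term[OF fin(1), of a0 b "a0 + b0"] ab unique by (simp add: A_def)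
  then have "a0 + b0 \<in> supp (lmult a b)" using ab by (simp add: supp_def A_def B_def)
  then show ?thesis using that ab by (auto simp: A_def B_def)
qed

lemma supp_lmult_nonempty:
  assumes "laurent a" "laurent b" "supp a \<noteq> {}" "supp b \<noteq> {}"
  shows "supp (lmult a b) \<noteq> {}"
  using lmult_extremal_term[OF assms] by blast

lemma lmult_right_cancel:
  assumes "laurent h1" "laurent h2" "laurent k" "supp k \<noteq> {}" "lmult h1 k = lmult h2 k"
  shows "h1 = h2"
proof (rule ccontr)
  assume "h1 \<noteq> h2"
  define d where "d = (\<lambda>x. h1 x - h2 x)"
  have "supp d \<subseteq> supp h1 \<union> supp h2" by (auto simp: d_def supp_def)
  then have "laurent d" using assms(1,2) unfolding laurent_def by (meson finite_UnI finite_subset le_sup_iff order_trans)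
  moreover have "supp d \<noteq> {}" using \<open>h1 \<noteq> h2\<close> by (auto simp: d_def supp_def fun_eq_iff)
  ultimately have "supp (lmult d k) \<noteq> {}" using supp_lmult_nonempty assms(3,4) by blast
  moreover have "lmult d k = (\<lambda>_. 0)" using lmult_diff_left[OF assms(1,2), of k] assms(5) by (simp add: d_def)
  ultimately show False by (simp add: supp_def)
qed

lemma supp_lpow_nonempty: "laurent g \<Longrightarrow> supp g \<noteq> {} \<Longrightarrow> supp (lpow g k) \<noteq> {}"
proof (induction k)
  case 0
  then show ?case by (auto simp: supp_def)
next
  case (Suc k)
  then show ?case by (simp add: lpow_Suc supp_lmult_nonempty laurent_lpow)
qed

lemma lmult_lower_bound_iff:
  assumes "laurent a" "laurent b" "w0 \<in> supp b" "\<forall>w\<in>supp b. c \<bullet> w0 \<le> c \<bullet> w"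
  shows "(\<forall>v\<in>supp (lmult a b). t \<le> c \<bullet> v) \<longleftrightarrow> (\<forall>v\<in>supp a. t - c \<bullet> w0 \<le> c \<bullet> v)"
proof
  assume bound: "\<forall>v\<in>supp (lmult a b). t \<le> c \<bullet> v"
  show "\<forall>v\<in>supp a. t - c \<bullet> w0 \<le> c \<bullet> v"
  proof
    fix v assume v: "v \<in> supp a"
    then have "supp a \<noteq> {}" "supp b \<noteq> {}" using assms(3) by auto
    then obtain a0 b0 where "a0 \<in> supp a" "b0 \<in> supp b" "a0 + b0 \<in> supp (lmult a b)"
      "\<forall>y\<in>supp a. c \<bullet> a0 \<le> c \<bullet> y" "\<forall>z\<in>supp b. c \<bullet> b0 \<le> c \<bullet> z"
      by (rule lmult_extremal_term[OF assms(1,2)])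
    moreover from this have "c \<bullet> b0 = c \<bullet> w0" using assms(3,4) by (meson order_antisym)
    ultimately show "t - c \<bullet> w0 \<le> c \<bullet> v" using bound v by (fastforce simp: inner_add_right)
  qed
next
  assume bound: "\<forall>v\<in>supp a. t - c \<bullet> w0 \<le> c \<bullet> v"
  show "\<forall>v\<in>supp (lmult a b). t \<le> c \<bullet> v"
  proof
    fix v assume "v \<in> supp (lmult a b)"
    then obtain y z where "v = y + z" "y \<in> supp a" "z \<in> supp b" using supp_lmult_subset by blast
    then show "t \<le> c \<bullet> v" using bound assms(4) by (fastforce simp: inner_add_right)
  qed
qed

lemma lpow_minimizer:
  assumes "laurent g" "q0 \<in> supp g" "\<forall>y\<in>supp g. c \<bullet> q0 \<le> c \<bullet> y"
  shows "\<exists>w0\<in>supp (lpow g k). c \<bullet> w0 = real k * (c \<bullet> q0) \<and> (\<forall>w\<in>supp (lpow g k). c \<bullet> w0 \<le> c \<bullet> w)"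
proof (induction k)
  case 0
  then show ?case by (auto simp: supp_def)
next
  case (Suc k)
  then obtain w0 where w0: "w0 \<in> supp (lpow g k)" "c \<bullet> w0 = real k * (c \<bullet> q0)"
    "\<forall>w\<in>supp (lpow g k). c \<bullet> w0 \<le> c \<bullet> w" by blast
  have "supp g \<noteq> {}" "supp (lpow g k) \<noteq> {}" using assms(2) w0(1) by auto
  then obtain a0 b0 where ab: "a0 \<in> supp g" "b0 \<in> supp (lpow g k)" "a0 + b0 \<in> supp (lmult g (lpow g k))"
    "\<forall>y\<in>supp g. c \<bullet> a0 \<le> c \<bullet> y" "\<forall>z\<in>supp (lpow g k). c \<bullet> b0 \<le> c \<bullet> z"
    by (rule lmult_extremal_term[OF assms(1) laurent_lpow[OF assms(1)]])
  have "c \<bullet> a0 = c \<bullet> q0" "c \<bullet> b0 = c \<bullet> w0" using ab assms(2,3) w0 by (meson order_antisym)+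
  then have "c \<bullet> (a0 + b0) = real (Suc k) * (c \<bullet> q0)" using w0(2) by (simp add: inner_add_right algebra_simps)
  moreover have "c \<bullet> (a0 + b0) \<le> c \<bullet> w" if "w \<in> supp (lpow g (Suc k))" for w
  proof -
    have "w \<in> supp (lmult g (lpow g k))" using that by (simp add: lpow_Suc)
    then obtain y z where "w = y + z" "y \<in> supp g" "z \<in> supp (lpow g k)"
      using supp_lmult_subset by blast
    then show ?thesis using ab by (simp add: inner_add_right add_mono)
  qed
  ultimately show ?case using ab(3) unfolding lpow_Suc by blast
qed

lemma supp_lmult_hyperplane:
  "supp a \<subseteq> {x. c \<bullet> x = s} \<Longrightarrow> supp b \<subseteq> {x. c \<bullet> x = t} \<Longrightarrow> supp (lmult a b) \<subseteq> {x. c \<bullet> x = s + t}"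
  using supp_lmult_subset[of a b] by (force simp: inner_add_right)

lemma supp_lpow_hyperplane: "supp g \<subseteq> {x. c \<bullet> x = 0} \<Longrightarrow> supp (lpow g k) \<subseteq> {x. c \<bullet> x = 0}"
proof (induction k)
  case 0
  then show ?case by (auto simp: supp_def)
next
  case (Suc k)
  then show ?case using supp_lmult_hyperplane[of g c 0 "lpow g k" 0] by (simp add: lpow_Suc)
qed

lemma supp_lmult_left_factor_hyperplane:
  assumes "laurent a" "laurent b" "supp b \<noteq> {}" "supp b \<subseteq> {x. c \<bullet> x = 0}"
    and "supp (lmult a b) \<subseteq> {x. c \<bullet> x = t}"
  shows "supp a \<subseteq> {x. c \<bullet> x = t}"
proof -
  obtain w0 where w0: "w0 \<in> supp b" using assms(3) by blast
  have zero: "c \<bullet> w = 0" if "w \<in> supp b" for w using that assms(4) by blast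
  have flat: "\<forall>w\<in>supp b. c \<bullet> w0 \<le> c \<bullet> w" "\<forall>w\<in>supp b. (- c) \<bullet> w0 \<le> (- c) \<bullet> w"
    using zero w0 by auto
  have "\<forall>v\<in>supp a. t \<le> c \<bullet> v"
    using lmult_lower_bound_iff[OF assms(1,2) w0 flat(1), where t = t] assms(5) zero[OF w0] by auto
  moreover have "\<forall>v\<in>supp a. - t \<le> (- c) \<bullet> v"
    using lmult_lower_bound_iff[OF assms(1,2) w0 flat(2), where t = "- t"] assms(5) zero[OF w0] by auto
  ultimately show ?thesis by force
qed

section \<open>Supports of mutations\<close>

lemma supp_slice: "supp (slice m f i) = supp f \<inter> {x. phi m x = real_of_int i}"
  by (auto simp: slice_def supp_def)

lemma laurent_slice: "laurent f \<Longrightarrow> laurent (slice m f i)"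
  by (auto simp: laurent_def supp_slice)

lemma ldiv_slice_nonneg:
  assumes "laurent g" "supp g \<noteq> {}" "mutable m g f" "0 \<le> i"
  shows "laurent (ldiv_slice m g f i)" "lmult (ldiv_slice m g f i) (lpow g (nat i)) = slice m f i"
proof -
  let ?quotient = "\<lambda>h. laurent h \<and> lmult h (lpow g (nat i)) = slice m f i"
  obtain h where "?quotient h"
    using assms(3,4) unfolding mutable_def by (metis nat_0_le)
  moreover have "h' = h" if "?quotient h'" for h'
    by (rule lmult_right_cancel[of h' h "lpow g (nat i)"])
      (use that \<open>?quotient h\<close> assms(1,2) in \<open>auto simp: laurent_lpow supp_lpow_nonempty\<close>)
  ultimately have "?quotient (THE h. ?quotient h)" by (rule theI)
  then show "laurent (ldiv_slice m g f i)" "lmult (ldiv_slice m g f i) (lpow g (nat i)) = slice m f i"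
    using assms(4) by (simp_all add: ldiv_slice_def)
qed

lemma ldiv_slice_neg: "i < 0 \<Longrightarrow> ldiv_slice m g f i = lmult (slice m f i) (lpow g (nat (- i)))"
  by (simp add: ldiv_slice_def)

lemma laurent_ldiv_slice:
  assumes "laurent f" "laurent g" "supp g \<noteq> {}" "mutable m g f"
  shows "laurent (ldiv_slice m g f i)"
proof (cases "0 \<le> i")
  case True
  then show ?thesis by (rule ldiv_slice_nonneg(1)[OF assms(2-4)])
next
  case False
  then show ?thesis by (simp add: ldiv_slice_neg laurent_lmult laurent_slice laurent_lpow assms(1,2))
qed

lemma supp_ldiv_slice:
  assumes "laurent f" "laurent g" "supp g \<noteq> {}" "supp g \<subseteq> {x. fst m \<bullet> x = 0}" "mutable m g f"
  shows "supp (ldiv_slice m g f i) \<subseteq> {x. phi m x = real_of_int i}"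
proof -
  let ?level = "{x. fst m \<bullet> x = real_of_int i - snd m}"
  have slice: "supp (slice m f i) \<subseteq> ?level" by (auto simp: supp_slice phi_def)
  have pow: "supp (lpow g k) \<subseteq> {x. fst m \<bullet> x = 0}" for k
    by (rule supp_lpow_hyperplane[OF assms(4)])
  have "supp (ldiv_slice m g f i) \<subseteq> ?level"
  proof (cases "0 \<le> i")
    case True
    have "supp (lmult (ldiv_slice m g f i) (lpow g (nat i))) \<subseteq> ?level"
      using ldiv_slice_nonneg(2)[OF assms(2,3,5) True] slice by simp
    then show ?thesis
      by (rule supp_lmult_left_factor_hyperplane[OF laurent_ldiv_slice[OF assms(1-3,5)]
            laurent_lpow[OF assms(2)] supp_lpow_nonempty[OF assms(2,3)] pow])
  next
    case False
    then show ?thesis using supp_lmult_hyperplane[OF slice pow] by (simp add: ldiv_slice_neg)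
  qed
  then show ?thesis by (auto simp: phi_def)
qed

lemma finite_slice_indices: "laurent f \<Longrightarrow> finite {i::int. \<exists>y\<in>supp f. phi m y = real_of_int i}"
proof -
  assume "laurent f"
  have "{i::int. \<exists>y\<in>supp f. phi m y = real_of_int i} \<subseteq> (\<lambda>y. \<lfloor>phi m y\<rfloor>) ` supp f"
    by force
  then show ?thesis using \<open>laurent f\<close> finite_surj unfolding laurent_def by blast
qed

lemma supp_sum_disjoint:
  assumes "finite I" "disjoint_family_on (\<lambda>i. supp (D i)) I"
  shows "supp (\<lambda>x. \<Sum>i\<in>I. D i x) = (\<Union>i\<in>I. supp (D i))"
proof (intro set_eqI iffI)
  fix x assume "x \<in> supp (\<lambda>x. \<Sum>i\<in>I. D i x)"
  then have "(\<Sum>i\<in>I. D i x) \<noteq> 0" by (simp add: supp_def)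
  then obtain i where "i \<in> I" "D i x \<noteq> 0" by (meson sum.neutral)
  then show "x \<in> (\<Union>i\<in>I. supp (D i))" by (auto simp: supp_def)
next
  fix x assume "x \<in> (\<Union>i\<in>I. supp (D i))"
  then obtain j where j: "j \<in> I" "x \<in> supp (D j)" by blast
  have "D i x = 0" if "i \<in> I - {j}" for i
    using assms(2) j that unfolding disjoint_family_on_def supp_def by blast
  then have "(\<Sum>i\<in>I. D i x) = D j x"
    using assms(1) j(1) by (simp add: sum.remove)
  then show "x \<in> supp (\<lambda>x. \<Sum>i\<in>I. D i x)" using j(2) by (simp add: supp_def)
qed

lemma supp_mut:
  assumes "laurent f" "laurent g" "supp g \<noteq> {}" "supp g \<subseteq> {x. fst m \<bullet> x = 0}" "mutable m g f"
  shows "supp (mut m g f) = (\<Union>i\<in>{i. \<exists>y\<in>supp f. phi m y = real_of_int i}. supp (ldiv_slice m g f i))"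
  unfolding mut_def
proof (rule supp_sum_disjoint)
  show "finite {i. \<exists>y\<in>supp f. phi m y = real_of_int i}" by (rule finite_slice_indices[OF assms(1)])
  show "disjoint_family_on (\<lambda>i. supp (ldiv_slice m g f i)) {i. \<exists>y\<in>supp f. phi m y = real_of_int i}"
  proof (unfold disjoint_family_on_def, intro ballI impI)
    fix i j :: int assume "i \<noteq> j"
    then have "{x. phi m x = real_of_int i} \<inter> {x. phi m x = real_of_int j} = {}" by auto
    then show "supp (ldiv_slice m g f i) \<inter> supp (ldiv_slice m g f j) = {}"
      using supp_ldiv_slice[OF assms, of i] supp_ldiv_slice[OF assms, of j] by blast
  qed
qed

lemma supp_eq_Union_slices:
  assumes "laurent f" "m \<in> Mtilde"
  shows "supp f = (\<Union>i\<in>{i. \<exists>y\<in>supp f. phi m y = real_of_int i}. supp (slice m f i))"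
proof (intro set_eqI iffI)
  fix x assume x: "x \<in> supp f"
  then have "x \<in> lattice" using assms(1) by (auto simp: laurent_def)
  then have "phi m x \<in> \<int>" by (rule phi_Ints[OF assms(2)])
  then obtain i where "phi m x = real_of_int i" by (auto elim: Ints_cases)
  then show "x \<in> (\<Union>i\<in>{i. \<exists>y\<in>supp f. phi m y = real_of_int i}. supp (slice m f i))"
    using x by (auto simp: supp_slice)
qed (auto simp: supp_slice)

lemma slice_lower_bound_iff:
  assumes "laurent f" "laurent g" "mutable m g f" "q0 \<in> supp g" "\<forall>y\<in>supp g. c \<bullet> q0 \<le> c \<bullet> y"
  shows "(\<forall>v\<in>supp (slice m f i). t \<le> c \<bullet> v) \<longleftrightarrow>
    (\<forall>v\<in>supp (ldiv_slice m g f i). t \<le> c \<bullet> v + (c \<bullet> q0) * real_of_int i)"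
proof -
  have g_nonempty: "supp g \<noteq> {}" using assms(4) by blast
  obtain w0 where w0: "w0 \<in> supp (lpow g (nat \<bar>i\<bar>))" "c \<bullet> w0 = real (nat \<bar>i\<bar>) * (c \<bullet> q0)"
    "\<forall>w\<in>supp (lpow g (nat \<bar>i\<bar>)). c \<bullet> w0 \<le> c \<bullet> w"
    using lpow_minimizer[OF assms(2,4,5)] by blast
  note lower_bound_iff = lmult_lower_bound_iff[OF _ laurent_lpow[OF assms(2)] w0(1,3)]
  show ?thesis
  proof (cases "0 \<le> i")
    case True
    then show ?thesis
      using lower_bound_iff[OF laurent_ldiv_slice[OF assms(1,2) g_nonempty assms(3), of i], where t = t]
        ldiv_slice_nonneg(2)[OF assms(2) g_nonempty assms(3) True] w0(2)
      by (simp add: algebra_simps)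
  next
    case False
    then show ?thesis
      using lower_bound_iff[OF laurent_slice[OF assms(1)], where t = "t - (c \<bullet> q0) * real_of_int i"] w0(2)
      by (simp add: ldiv_slice_neg algebra_simps)
  qed
qed

lemma mut_lower_bound_iff:
  assumes "laurent f" "laurent g" "mutable m g f" "m \<in> Mtilde" "supp g \<subseteq> {x. fst m \<bullet> x = 0}"
    and "q0 \<in> supp g" "\<forall>y\<in>supp g. c \<bullet> q0 \<le> c \<bullet> y"
  shows "(\<forall>v\<in>supp f. t \<le> c \<bullet> v) \<longleftrightarrow> (\<forall>v\<in>supp (mut m g f). t \<le> c \<bullet> v + (c \<bullet> q0) * phi m v)"
proof -
  let ?I = "{i. \<exists>y\<in>supp f. phi m y = real_of_int i}"
  have g_nonempty: "supp g \<noteq> {}" using assms(6) by blast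
  have "(\<forall>v\<in>supp f. t \<le> c \<bullet> v) \<longleftrightarrow> (\<forall>i\<in>?I. \<forall>v\<in>supp (slice m f i). t \<le> c \<bullet> v)"
    using supp_eq_Union_slices[OF assms(1,4)] by blast
  also have "\<dots> \<longleftrightarrow> (\<forall>i\<in>?I. \<forall>v\<in>supp (ldiv_slice m g f i). t \<le> c \<bullet> v + (c \<bullet> q0) * real_of_int i)"
    using slice_lower_bound_iff[OF assms(1-3,6,7)] by blast
  also have "\<dots> \<longleftrightarrow> (\<forall>i\<in>?I. \<forall>v\<in>supp (ldiv_slice m g f i). t \<le> c \<bullet> v + (c \<bullet> q0) * phi m v)"
    using supp_ldiv_slice[OF assms(1,2) g_nonempty assms(5,3)] by fastforce
  also have "\<dots> \<longleftrightarrow> (\<forall>v\<in>supp (mut m g f). t \<le> c \<bullet> v + (c \<bullet> q0) * phi m v)"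
    unfolding supp_mut[OF assms(1,2) g_nonempty assms(5,3)] by blast
  finally show ?thesis .
qed

section \<open>The monoids and the map xi\<close>

lemma S_monoid_convex_hull:
  "S_monoid (convex hull V) = {h \<in> Mtilde. \<forall>v\<in>V. 0 \<le> fst h \<bullet> v + snd h}"
proof (intro set_eqI iffI)
  fix h assume h: "h \<in> S_monoid (convex hull V)"
  have "0 \<le> fst h \<bullet> v + snd h" if "v \<in> V" for v
  proof -
    have "(v, 1) \<in> cone_over (convex hull V)"
      unfolding cone_over_def using that by (meson hull_inc image_eqI)
    then show ?thesis using h by (cases h) (auto simp: S_monoid_def)
  qed
  then show "h \<in> {h \<in> Mtilde. \<forall>v\<in>V. 0 \<le> fst h \<bullet> v + snd h}"
    using h by (simp add: S_monoid_def)
next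
  fix h assume h: "h \<in> {h \<in> Mtilde. \<forall>v\<in>V. 0 \<le> fst h \<bullet> v + snd h}"
  have "convex hull V \<subseteq> {v. - snd h \<le> fst h \<bullet> v}"
    by (rule hull_minimal) (use h in \<open>auto simp: convex_halfspace_ge\<close>)
  then have "(\<lambda>v. (v, 1::real)) ` (convex hull V) \<subseteq> {w. 0 \<le> h \<bullet> w}"
    by (cases h) auto
  then have "cone_over (convex hull V) \<subseteq> {w. 0 \<le> h \<bullet> w}"
    unfolding cone_over_def by (rule hull_minimal) (rule convex_cone_halfspace_ge)
  then show "h \<in> S_monoid (convex hull V)" using h by (auto simp: S_monoid_def)
qed

lemma S_monoid_newton: "S_monoid (newton f) = {h \<in> Mtilde. \<forall>v\<in>supp f. 0 \<le> fst h \<bullet> v + snd h}"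
  unfolding newton_def by (rule S_monoid_convex_hull)

lemma eta_convex_hull:
  assumes "q0 \<in> V" "\<forall>y\<in>V. c \<bullet> q0 \<le> c \<bullet> y"
  shows "eta (convex hull V) c = - (c \<bullet> q0)"
proof -
  have "convex hull V \<subseteq> {v. c \<bullet> q0 \<le> c \<bullet> v}"
    by (rule hull_minimal) (use assms in \<open>auto simp: convex_halfspace_ge\<close>)
  then have "Inf ((\<lambda>v. v \<bullet> c) ` (convex hull V)) = q0 \<bullet> c"
  proof (intro cInf_eq_minimum)
    show "q0 \<bullet> c \<in> (\<lambda>v. v \<bullet> c) ` (convex hull V)" using assms(1) by (intro imageI hull_inc)
  qed (use \<open>convex hull V \<subseteq> _\<close> in \<open>auto simp: inner_commute\<close>)
  then show ?thesis by (simp add: eta_def inner_commute)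
qed

lemma eta_Ints:
  assumes "lattice_polytope Q" "c \<in> lattice"
  shows "eta Q c \<in> \<int>"
proof -
  obtain V where V: "finite V" "V \<noteq> {}" "V \<subseteq> lattice" "Q = convex hull V"
    using assms(1) unfolding lattice_polytope_def by blast
  then obtain q0 where "q0 \<in> V" "\<forall>y\<in>V. c \<bullet> q0 \<le> c \<bullet> y"
    using finite_has_minimizer[of V "(\<bullet>) c"] by blast
  then show ?thesis
    using V eta_convex_hull lattice_inner_Ints[OF assms(2)] by (metis Ints_minus subsetD)
qed

lemma eta_add_orthogonal: "Q \<subseteq> {x. a \<bullet> x = 0} \<Longrightarrow> eta Q (c + t *\<^sub>R a) = eta Q c"
  unfolding eta_def
  by (rule arg_cong[where f = "\<lambda>X. - Inf X"], rule image_cong)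
    (auto simp: inner_add_right inner_commute)

lemma xi_uminus_xi:
  assumes "Q \<subseteq> {x. fst m \<bullet> x = 0}"
  shows "xi (- m) Q (xi m Q h) = h"
proof -
  have "eta Q (fst (xi m Q h)) = eta Q (fst h)"
    using eta_add_orthogonal[OF assms, of "fst h" "- eta Q (fst h)"] by (simp add: xi_def)
  then show ?thesis by (simp add: xi_def)
qed

lemma xi_Mtilde:
  assumes "lattice_polytope Q" "m \<in> Mtilde" "h \<in> Mtilde"
  shows "xi m Q h \<in> Mtilde"
proof -
  have "eta Q (fst h) \<in> \<int>" using eta_Ints[OF assms(1)] assms(3) by (simp add: Mtilde_def)
  then show ?thesis
    using assms(2,3) by (auto simp: Mtilde_def xi_def intro!: lattice_diff lattice_scaleR)
qed

lemma lattice_polytope_newton: "laurent g \<Longrightarrow> supp g \<noteq> {} \<Longrightarrow> lattice_polytope (newton g)"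
  by (auto simp: lattice_polytope_def newton_def laurent_def)

lemma xi_S_monoid_iff:
  assumes "laurent f" "laurent g" "supp g \<noteq> {}" "mutable m g f" "m \<in> Mtilde"
    and "supp g \<subseteq> {x. fst m \<bullet> x = 0}" "h \<in> Mtilde"
  shows "h \<in> S_monoid (newton f) \<longleftrightarrow> xi m (newton g) h \<in> S_monoid (newton (mut m g f))"
proof -
  obtain c s where h: "h = (c, s)" by fastforce
  obtain q0 where q0: "q0 \<in> supp g" "\<forall>y\<in>supp g. c \<bullet> q0 \<le> c \<bullet> y"
    using finite_has_minimizer[of "supp g" "(\<bullet>) c"] assms(2,3) by (auto simp: laurent_def)
  have "eta (newton g) c = - (c \<bullet> q0)"
    unfolding newton_def by (rule eta_convex_hull[OF q0])
  then have pairing: "fst (xi m (newton g) h) \<bullet> v + snd (xi m (newton g) h)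
      = c \<bullet> v + s + (c \<bullet> q0) * phi m v" for v
    by (simp add: h xi_def phi_def inner_diff_left algebra_simps)
  have "h \<in> S_monoid (newton f) \<longleftrightarrow> (\<forall>v\<in>supp f. - s \<le> c \<bullet> v)"
    using assms(7) by (auto simp: S_monoid_newton h)
  also have "\<dots> \<longleftrightarrow> (\<forall>v\<in>supp (mut m g f). - s \<le> c \<bullet> v + (c \<bullet> q0) * phi m v)"
    by (rule mut_lower_bound_iff[OF assms(1,2,4,5,6) q0])
  also have "\<dots> \<longleftrightarrow> xi m (newton g) h \<in> S_monoid (newton (mut m g f))"
    using xi_Mtilde[OF lattice_polytope_newton[OF assms(2,3)] assms(5,7)]
    by (auto simp: S_monoid_newton pairing)
  finally show ?thesis .
qed

section \<open>Existence of normalized mutable pairs\<close>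

lemma extreme_point_of_convex_combination:
  assumes "x extreme_point_of S" "a \<in> S" "b \<in> S" "0 < u" "u < 1" "x = (1 - u) *\<^sub>R a + u *\<^sub>R b"
  shows "a = x"
proof -
  have "a = b" using assms unfolding extreme_point_of_def in_segment by blast
  then show ?thesis using assms(6) by simp
qed

lemma extreme_point_of_midpoint:
  assumes "x extreme_point_of S" "a \<in> S" "b \<in> S" "a + b = 2 *\<^sub>R x"
  shows "a = x"
proof (rule extreme_point_of_convex_combination[OF assms(1-3)])
  show "x = (1 - 1 / 2) *\<^sub>R a + (1 / 2) *\<^sub>R b"
    using arg_cong[OF assms(4), of "\<lambda>v. (1 / 2 :: real) *\<^sub>R v"] by (simp add: scaleR_add_right)
qed simp_all

lemma extreme_point_of_minkowski_summand:
  assumes "e extreme_point_of P" "\<forall>q'\<in>Q. k *\<^sub>R q' + r \<in> P" "k \<noteq> 0" "q \<in> Q" "e = k *\<^sub>R q + r"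
  shows "q extreme_point_of Q"
  unfolding extreme_point_of_def
proof (intro conjI ballI notI)
  fix a b assume ab: "a \<in> Q" "b \<in> Q" and "q \<in> open_segment a b"
  then obtain u where u: "a \<noteq> b" "0 < u" "u < 1" "q = (1 - u) *\<^sub>R a + u *\<^sub>R b"
    unfolding in_segment by blast
  have "(1 - u) *\<^sub>R (k *\<^sub>R a + r) + u *\<^sub>R (k *\<^sub>R b + r) = k *\<^sub>R ((1 - u) *\<^sub>R a + u *\<^sub>R b) + r"
    by (simp add: algebra_simps)
  then have "e = (1 - u) *\<^sub>R (k *\<^sub>R a + r) + u *\<^sub>R (k *\<^sub>R b + r)"
    using u(4) assms(5) by simp
  then have "k *\<^sub>R a + r = e" "k *\<^sub>R b + r = e"
    using extreme_point_of_convex_combination[OF assms(1), of _ _ u]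
      extreme_point_of_convex_combination[OF assms(1), of _ _ "1 - u"] assms(2) ab u(2,3)
    by (simp_all add: add.commute)
  then have "k *\<^sub>R a = k *\<^sub>R b" by (metis add_right_cancel)
  then show False using u(1) assms(3) by simp
qed (use assms(4) in simp)

lemma supp_lpow_subset_scaled:
  assumes "convex Q" "Q \<noteq> {}" "supp g \<subseteq> Q"
  shows "supp (lpow g k) \<subseteq> (*\<^sub>R) (real k) ` Q"
proof (induction k)
  case 0
  then show ?case using assms(2) by (auto simp: supp_def)
next
  case (Suc k)
  show ?case
  proof
    fix w assume "w \<in> supp (lpow g (Suc k))"
    then obtain y z where yz: "w = y + z" "y \<in> supp g" "z \<in> supp (lpow g k)"
      using supp_lmult_subset[of g "lpow g k"] by (auto simp: lpow_Suc)
    then obtain q where q: "q \<in> Q" "z = real k *\<^sub>R q" using Suc.IH by blast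
    define p where "p = (1 / real (Suc k)) *\<^sub>R y + (real k / real (Suc k)) *\<^sub>R q"
    have "p \<in> Q" unfolding p_def
      by (rule convexD[OF assms(1)]) (use yz(2) assms(3) q(1) in \<open>auto simp: field_simps\<close>)
    moreover have "w = real (Suc k) *\<^sub>R p" unfolding p_def yz(1) q(2)
      by (simp add: scaleR_add_right)
    ultimately show "w \<in> (*\<^sub>R) (real (Suc k)) ` Q" by blast
  qed
qed

lemma lpow_at_scaled_extreme_point:
  assumes "laurent g" "convex Q" "supp g \<subseteq> Q" "q extreme_point_of Q" "g q = 1"
  shows "lpow g k (real k *\<^sub>R q) = 1"
proof (induction k)
  case 0
  then show ?case by simp
next
  case (Suc k)
  have "q \<in> Q" "q \<in> supp g" using assms(4,5) by (auto simp: extreme_point_of_def supp_def)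
  have "y = q" if y: "y \<in> supp g" and nz: "lpow g k (real (Suc k) *\<^sub>R q - y) \<noteq> 0" for y
  proof -
    have "real (Suc k) *\<^sub>R q - y \<in> supp (lpow g k)" using nz by (simp add: supp_def)
    then obtain q' where q': "q' \<in> Q" "real (Suc k) *\<^sub>R q - y = real k *\<^sub>R q'"
      using supp_lpow_subset_scaled[OF assms(2) _ assms(3)] \<open>q \<in> Q\<close> by blast
    define u where "u = real k / real (Suc k)"
    have "q = (1 - u) *\<^sub>R y + u *\<^sub>R q'"
    proof -
      have "real (Suc k) * (1 - u) = 1" "real (Suc k) * u = real k" by (simp_all add: u_def field_simps)
      then have "real (Suc k) *\<^sub>R ((1 - u) *\<^sub>R y + u *\<^sub>R q') = y + real k *\<^sub>R q'"
        by (simp add: scaleR_add_right)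
      also have "\<dots> = real (Suc k) *\<^sub>R q" using q'(2) by (simp add: algebra_simps)
      finally have "real (Suc k) *\<^sub>R q = real (Suc k) *\<^sub>R ((1 - u) *\<^sub>R y + u *\<^sub>R q')" ..
      then show ?thesis by (metis of_nat_Suc of_nat_0_neq scaleR_cancel_left)
    qed
    show "y = q"
    proof (cases "k = 0")
      case True
      then show ?thesis using q'(2) by simp
    next
      case False
      then have "0 < u" "u < 1" by (auto simp: u_def)
      then show ?thesis
        using extreme_point_of_convex_combination[OF assms(4) _ q'(1)] y assms(3) \<open>q = _\<close> by blast
    qed
  qed
  then have "lmult g (lpow g k) (real (Suc k) *\<^sub>R q) = g q * lpow g k (real (Suc k) *\<^sub>R q - q)"
    using lmult_single_term[of g q] assms(1) \<open>q \<in> supp g\<close> by (simp add: laurent_def)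
  then show ?case using Suc.IH assms(5) by (simp add: lpow_Suc algebra_simps)
qed

lemma extreme_points_lattice_polytope:
  assumes "lattice_polytope P"
  shows "finite {e. e extreme_point_of P}" "{e. e extreme_point_of P} \<subseteq> lattice"
    "P = convex hull {e. e extreme_point_of P}"
proof -
  obtain V where V: "finite V" "V \<subseteq> lattice" "P = convex hull V"
    using assms unfolding lattice_polytope_def by blast
  then have "{e. e extreme_point_of P} \<subseteq> V" using extreme_point_of_convex_hull by blast
  then show "finite {e. e extreme_point_of P}" "{e. e extreme_point_of P} \<subseteq> lattice"
    using V(1,2) finite_subset by blast+
  show "P = convex hull {e. e extreme_point_of P}"
    by (rule Krein_Milman_Minkowski) (simp_all add: V(1,3) finite_imp_compact_convex_hull)
qed

lemma normalized_with_newton: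
  assumes "lattice_polytope Q"
  obtains g where "normalized g" "newton g = Q"
proof -
  obtain V where V: "finite V" "V \<subseteq> lattice" "Q = convex hull V"
    using assms unfolding lattice_polytope_def by blast
  show ?thesis
  proof (rule that)
    show "normalized (\<lambda>x. of_bool (x \<in> V))" using V(1,2) by (rule normalized_of_bool)
    show "newton (\<lambda>x. of_bool (x \<in> V)) = Q" using V(3) by (simp add: newton_def)
  qed
qed

lemma deformation_pair_extreme_point_decomposition:
  assumes "deformation_pair P m Q" "e extreme_point_of P" "phi m e = real_of_int j"
  obtains q where "q extreme_point_of Q" "\<forall>q'\<in>Q. real (nat j) *\<^sub>R q' + (e - real (nat j) *\<^sub>R q) \<in> P"
proof (cases "0 < j")
  case True
  have "e \<in> P \<inter> {x. phi m x = real (nat j)}"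
    using assms(2,3) True by (auto simp: extreme_point_of_def)
  then obtain R where R: "P \<inter> {x. phi m x = real (nat j)} = minkowski_sum ((*\<^sub>R) (real (nat j)) ` Q) R"
    using assms(1) unfolding deformation_pair_def by blast
  then obtain q r where qr: "q \<in> Q" "r \<in> R" "e = real (nat j) *\<^sub>R q + r"
    using \<open>e \<in> _\<close> unfolding minkowski_sum_def by blast
  have in_P: "\<forall>q'\<in>Q. real (nat j) *\<^sub>R q' + r \<in> P"
    using R qr(2) unfolding minkowski_sum_def by blast
  moreover have "q extreme_point_of Q"
    using extreme_point_of_minkowski_summand[OF assms(2) in_P _ qr(1,3)] True by simp
  ultimately show ?thesis using that qr(3) by (simp add: algebra_simps)
next
  case False
  obtain V where "finite V" "V \<noteq> {}" "Q = convex hull V"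
    using assms(1) unfolding deformation_pair_def lattice_polytope_def by blast
  then obtain q where "q extreme_point_of Q"
    using extreme_point_exists_convex[of Q] by (auto simp: finite_imp_compact_convex_hull)
  moreover have "e \<in> P" using assms(2) by (simp add: extreme_point_of_def)
  ultimately show ?thesis using that False by simp
qed

lemma lmult_lpow_at_extreme_point:
  assumes "e extreme_point_of P" "laurent H" "\<forall>r\<in>supp H. \<forall>q'\<in>Q. real k *\<^sub>R q' + r \<in> P"
    and "laurent g" "convex Q" "supp g \<subseteq> Q" "q extreme_point_of Q" "g q = 1"
    and "e - real k *\<^sub>R q \<in> supp H"
  shows "lmult H (lpow g k) e = H (e - real k *\<^sub>R q)"
proof -
  let ?r = "e - real k *\<^sub>R q"
  have "q \<in> Q" using assms(7) by (simp add: extreme_point_of_def)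
  have unique: "y = ?r" if y: "y \<in> supp H" and nz: "lpow g k (e - y) \<noteq> 0" for y
  proof -
    have "e - y \<in> supp (lpow g k)" using nz by (simp add: supp_def)
    then obtain q' where q': "q' \<in> Q" "e - y = real k *\<^sub>R q'"
      using supp_lpow_subset_scaled[OF assms(5) _ assms(6)] \<open>q \<in> Q\<close> by blast
    have "real k *\<^sub>R q + y \<in> P" "real k *\<^sub>R q' + ?r \<in> P"
      using assms(3,9) y \<open>q \<in> Q\<close> q'(1) by auto
    moreover have "(real k *\<^sub>R q + y) + (real k *\<^sub>R q' + ?r) = 2 *\<^sub>R e"
      unfolding q'(2)[symmetric] by (simp add: scaleR_2 algebra_simps)
    ultimately have "real k *\<^sub>R q + y = e" by (rule extreme_point_of_midpoint[OF assms(1)])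
    then show ?thesis by (simp add: algebra_simps)
  qed
  have "lmult H (lpow g k) e = H ?r * lpow g k (e - ?r)"
    by (rule lmult_single_term) (use assms(2,9) unique in \<open>auto simp: laurent_def\<close>)
  then show ?thesis using lpow_at_scaled_extreme_point[OF assms(4-8)] by simp
qed

(* The j-th summand lives on the slice phi_m = j, so evaluating the summand with index
   floor (phi_m x) at x glues all of them into one Laurent polynomial. *)
lemma mutable_glued_slices:
  assumes "laurent g" "\<And>j. laurent (H j)" "finite {j. supp (H j) \<noteq> {}}"
    and "\<And>j. supp (lmult (H j) (lpow g (nat j))) \<subseteq> {x. phi m x = real_of_int j}"
  shows "mutable m g (\<lambda>x. lmult (H \<lfloor>phi m x\<rfloor>) (lpow g (nat \<lfloor>phi m x\<rfloor>)) x)"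
proof -
  define T where "T j = lmult (H j) (lpow g (nat j))" for j
  define F where "F x = T \<lfloor>phi m x\<rfloor> x" for x
  have slice_F: "slice m F j = T j" for j
  proof
    fix x show "slice m F j x = T j x"
    proof (cases "phi m x = real_of_int j")
      case True
      then show ?thesis by (simp add: slice_def F_def)
    next
      case False
      then have "x \<notin> supp (T j)" using assms(4)[of j] by (auto simp: T_def)
      then show ?thesis using False by (simp add: slice_def supp_def)
    qed
  qed
  have T_zero: "T j = (\<lambda>_. 0)" if "supp (H j) = {}" for j
  proof -
    have "H j = (\<lambda>_. 0)" using that by (auto simp: supp_def)
    then show ?thesis by (simp add: T_def)
  qed
  let ?J = "{j. supp (H j) \<noteq> {}}"
  have "supp F \<subseteq> (\<Union>j\<in>?J. supp (T j))"
  proof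
    fix x assume "x \<in> supp F"
    then have x: "x \<in> supp (T \<lfloor>phi m x\<rfloor>)" by (simp add: supp_def F_def)
    moreover have "supp (H \<lfloor>phi m x\<rfloor>) \<noteq> {}"
    proof
      assume "supp (H \<lfloor>phi m x\<rfloor>) = {}"
      then have "T \<lfloor>phi m x\<rfloor> x = 0" using T_zero by simp
      then show False using x by (simp add: supp_def)
    qed
    ultimately show "x \<in> (\<Union>j\<in>?J. supp (T j))" by blast
  qed
  moreover have "laurent (T j)" for j using assms(1,2) by (simp add: T_def laurent_lmult laurent_lpow)
  then have "finite (\<Union>j\<in>?J. supp (T j))" "(\<Union>j\<in>?J. supp (T j)) \<subseteq> lattice"
    using assms(3) by (auto simp: laurent_def)
  ultimately have "laurent F" unfolding laurent_def by (meson finite_subset order_trans)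
  moreover have "lmult (H (int i)) (lpow g i) = slice m F (int i)" for i
    by (simp add: slice_F T_def)
  ultimately have "mutable m g F" unfolding mutable_def using assms(2) by blast
  moreover have "F = (\<lambda>x. lmult (H \<lfloor>phi m x\<rfloor>) (lpow g (nat \<lfloor>phi m x\<rfloor>)) x)"
    by (simp add: fun_eq_iff F_def T_def)
  ultimately show ?thesis by simp
qed

lemma supp_lmult_lpow_subset:
  assumes "\<forall>r\<in>supp H. \<forall>q\<in>Q. real k *\<^sub>R q + r \<in> P" "convex Q" "Q \<noteq> {}" "supp g \<subseteq> Q"
  shows "supp (lmult H (lpow g k)) \<subseteq> P"
proof
  fix x assume "x \<in> supp (lmult H (lpow g k))"
  then obtain y z where "x = y + z" "y \<in> supp H" "z \<in> supp (lpow g k)"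
    using supp_lmult_subset by blast
  then show "x \<in> P"
    using supp_lpow_subset_scaled[OF assms(2-4), of k] assms(1) by (force simp: add.commute)
qed

lemma normalized_and_newton_eq:
  assumes "lattice_polytope P" "laurent f" "supp f \<subseteq> P" "\<And>e. e extreme_point_of P \<Longrightarrow> f e = 1"
  shows "normalized f" "newton f = P"
proof -
  have P: "P = convex hull {e. e extreme_point_of P}"
    by (rule extreme_points_lattice_polytope(3)[OF assms(1)])
  show "newton f = P"
  proof
    show "newton f \<subseteq> P" unfolding newton_def
      by (rule hull_minimal[OF assms(3)]) (metis P convex_convex_hull)
    have "{e. e extreme_point_of P} \<subseteq> supp f" using assms(4) by (auto simp: supp_def)
    then show "P \<subseteq> newton f" unfolding newton_def by (subst P) (rule hull_mono)
  qed
  then show "normalized f" using assms(2,4) by (simp add: normalized_def)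
qed

lemma normalized_mutable_pair_exists:
  fixes P Q :: "(real^'n) set"
  assumes "lattice_polytope P" "deformation_pair P m Q"
  shows "\<exists>f g. normalized f \<and> normalized g \<and> newton f = P \<and> newton g = Q \<and> mutable m g f"
proof -
  have m: "m \<in> Mtilde" and Q: "lattice_polytope Q" "Q \<subseteq> {x. fst m \<bullet> x = 0}"
    using assms(2) by (auto simp: deformation_pair_def)
  obtain g where g: "normalized g" "newton g = Q" using normalized_with_newton[OF Q(1)] by blast
  have "laurent g" using g(1) by (simp add: normalized_def)
  have "supp g \<subseteq> Q" "convex Q" using g(2) unfolding newton_def by (auto simp: hull_inc)
  have "Q \<noteq> {}" using Q(1) by (auto simp: lattice_polytope_def)
  define E where "E = {e. e extreme_point_of P}"
  have "finite E" "E \<subseteq> lattice" using extreme_points_lattice_polytope[OF assms(1)] by (simp_all add: E_def)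
  have phi_E: "phi m e = real_of_int \<lfloor>phi m e\<rfloor>" if "e \<in> E" for e
    using phi_Ints[OF m] that \<open>E \<subseteq> lattice\<close> by (metis Ints_cases floor_of_int subsetD)
  define k where "k e = nat \<lfloor>phi m e\<rfloor>" for e
  have "\<exists>q. q extreme_point_of Q \<and> (\<forall>q'\<in>Q. real (k e) *\<^sub>R q' + (e - real (k e) *\<^sub>R q) \<in> P)"
    if "e \<in> E" for e
    by (rule deformation_pair_extreme_point_decomposition[OF assms(2) _ phi_E[OF that]])
      (use that in \<open>auto simp: E_def k_def\<close>)
  then obtain q where q: "\<And>e. e \<in> E \<Longrightarrow> q e extreme_point_of Q"
    "\<And>e. e \<in> E \<Longrightarrow> \<forall>q'\<in>Q. real (k e) *\<^sub>R q' + (e - real (k e) *\<^sub>R q e) \<in> P"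
    by metis
  define r where "r e = e - real (k e) *\<^sub>R q e" for e
  have r_lattice: "r e \<in> lattice" if "e \<in> E" for e
  proof -
    have "q e \<in> supp g" using q(1)[OF that] g(2) by (auto simp: newton_def dest: extreme_point_of_convex_hull)
    then show ?thesis using \<open>laurent g\<close> \<open>E \<subseteq> lattice\<close> that
      by (auto simp: r_def laurent_def intro!: lattice_diff lattice_scaleR)
  qed
  have r_level: "fst m \<bullet> r e = real_of_int \<lfloor>phi m e\<rfloor> - snd m" if "e \<in> E" for e
  proof -
    have "fst m \<bullet> q e = 0" using q(1)[OF that] Q(2) by (auto simp: extreme_point_of_def)
    then show ?thesis using phi_E[OF that] by (simp add: r_def phi_def inner_diff_right)
  qed
  define H where "H j = (\<lambda>x. of_bool (x \<in> r ` {e \<in> E. \<lfloor>phi m e\<rfloor> = j}) :: complex)" for j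
  have supp_H: "supp (H j) = r ` {e \<in> E. \<lfloor>phi m e\<rfloor> = j}" for j by (simp add: H_def)
  have laurent_H: "laurent (H j)" for j
    using \<open>finite E\<close> r_lattice by (auto simp: laurent_def supp_H)
  have H_in_P: "\<forall>r'\<in>supp (H j). \<forall>q'\<in>Q. real (nat j) *\<^sub>R q' + r' \<in> P" for j
    using q(2) by (auto simp: supp_H r_def k_def)
  have supp_slice: "supp (lmult (H j) (lpow g (nat j))) \<subseteq> P \<inter> {x. phi m x = real_of_int j}" for j
  proof -
    have "supp (H j) \<subseteq> {x. fst m \<bullet> x = real_of_int j - snd m}" using r_level by (auto simp: supp_H)
    moreover have "supp (lpow g (nat j)) \<subseteq> {x. fst m \<bullet> x = 0}"
      using supp_lpow_hyperplane \<open>supp g \<subseteq> Q\<close> Q(2) by blast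
    ultimately have "supp (lmult (H j) (lpow g (nat j))) \<subseteq> {x. fst m \<bullet> x = real_of_int j - snd m + 0}"
      by (rule supp_lmult_hyperplane)
    then show ?thesis
      using supp_lmult_lpow_subset[OF H_in_P \<open>convex Q\<close> \<open>Q \<noteq> {}\<close> \<open>supp g \<subseteq> Q\<close>]
      by (auto simp: phi_def)
  qed
  define F where "F = (\<lambda>x. lmult (H \<lfloor>phi m x\<rfloor>) (lpow g (nat \<lfloor>phi m x\<rfloor>)) x)"
  have "mutable m g F" unfolding F_def
  proof (rule mutable_glued_slices[OF \<open>laurent g\<close> laurent_H])
    have "{j. supp (H j) \<noteq> {}} \<subseteq> (\<lambda>e. \<lfloor>phi m e\<rfloor>) ` E" by (auto simp: supp_H)
    then show "finite {j. supp (H j) \<noteq> {}}" using \<open>finite E\<close> finite_surj by blast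
  qed (use supp_slice in blast)
  have "F e = 1" if "e extreme_point_of P" for e
  proof -
    have "e \<in> E" using that by (simp add: E_def)
    have "g (q e) = 1" using g q(1)[OF \<open>e \<in> E\<close>] by (simp add: normalized_def)
    moreover have "r e \<in> supp (H \<lfloor>phi m e\<rfloor>)" using \<open>e \<in> E\<close> by (simp add: supp_H)
    ultimately show ?thesis
      using lmult_lpow_at_extreme_point[OF that laurent_H H_in_P \<open>laurent g\<close> \<open>convex Q\<close>
          \<open>supp g \<subseteq> Q\<close> q(1)[OF \<open>e \<in> E\<close>]]
      by (simp add: F_def r_def k_def H_def)
  qed
  moreover have "supp F \<subseteq> P" using supp_slice by (auto simp: F_def supp_def)
  ultimately have "normalized F" "newton F = P"
    using normalized_and_newton_eq[OF assms(1)] \<open>mutable m g F\<close> by (auto simp: mutable_def)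
  then show ?thesis using g \<open>mutable m g F\<close> by blast
qed

lemma P_mut_witness:
  assumes "lattice_polytope P" "deformation_pair P m Q"
  obtains f g where "normalized f" "normalized g" "newton f = P" "newton g = Q" "mutable m g f"
    "P_mut P m Q = newton (mut m g f)"
proof -
  have "\<exists>R f g. normalized f \<and> normalized g \<and> newton f = P \<and> newton g = Q \<and>
      mutable m g f \<and> R = newton (mut m g f)"
    using normalized_mutable_pair_exists[OF assms] by blast
  then have "\<exists>f g. normalized f \<and> normalized g \<and> newton f = P \<and> newton g = Q \<and>
      mutable m g f \<and> P_mut P m Q = newton (mut m g f)"
    unfolding P_mut_def by (rule someI_ex)
  then show ?thesis using that by blast
qed

lemma S_monoid_P_mut_iff:
  assumes "lattice_polytope P" "deformation_pair P m Q" "h \<in> Mtilde"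
  shows "h \<in> S_monoid P \<longleftrightarrow> xi m Q h \<in> S_monoid (P_mut P m Q)"
proof -
  obtain f g where fg: "normalized f" "normalized g" "newton f = P" "newton g = Q" "mutable m g f"
    "P_mut P m Q = newton (mut m g f)"
    by (rule P_mut_witness[OF assms(1,2)])
  have m: "m \<in> Mtilde" "lattice_polytope Q" "Q \<subseteq> {x. fst m \<bullet> x = 0}"
    using assms(2) by (auto simp: deformation_pair_def)
  have "laurent f" "laurent g" using fg(1,2) by (simp_all add: normalized_def)
  have "Q \<noteq> {}" using m(2) by (auto simp: lattice_polytope_def)
  then have "supp g \<noteq> {}" using fg(4) by (auto simp: newton_def)
  have "supp g \<subseteq> {x. fst m \<bullet> x = 0}" using fg(4) m(3) by (auto simp: newton_def hull_inc)
  then show ?thesis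
    using xi_S_monoid_iff[OF \<open>laurent f\<close> \<open>laurent g\<close> \<open>supp g \<noteq> {}\<close> fg(5) m(1) _ assms(3)]
      fg(3,4,6) by simp
qed

theorem lemma2p10:
  fixes P Q :: "(real^'n) set" and m :: "(real^'n) \<times> real"
  assumes "lattice_polytope P" and "deformation_pair P m Q"
  shows "bij_betw (xi m Q) (S_monoid P) (S_monoid (P_mut P m Q)) \<and>
         (\<forall>h \<in> S_monoid P. xi (- m) Q (xi m Q h) = h) \<and>
         (\<forall>h \<in> S_monoid (P_mut P m Q). xi m Q (xi (- m) Q h) = h)"
proof -
  have m: "m \<in> Mtilde" "lattice_polytope Q" "Q \<subseteq> {x. fst m \<bullet> x = 0}"
    using assms(2) by (auto simp: deformation_pair_def)
  have "Q \<subseteq> {x. fst (- m) \<bullet> x = 0}" using m(3) by auto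
  from xi_uminus_xi[OF m(3)] xi_uminus_xi[OF this]
  have inverse: "xi (- m) Q (xi m Q h) = h" "xi m Q (xi (- m) Q h) = h" for h
    by simp_all
  note S_iff = S_monoid_P_mut_iff[OF assms]
  have S_Mtilde: "S_monoid X \<subseteq> Mtilde" for X by (auto simp: S_monoid_def)
  have forward: "xi m Q ` S_monoid P \<subseteq> S_monoid (P_mut P m Q)" using S_iff S_Mtilde by blast
  have backward: "xi (- m) Q ` S_monoid (P_mut P m Q) \<subseteq> S_monoid P"
  proof
    fix h' assume "h' \<in> xi (- m) Q ` S_monoid (P_mut P m Q)"
    then obtain h where h: "h \<in> S_monoid (P_mut P m Q)" "h' = xi (- m) Q h" by blast
    then have "h' \<in> Mtilde" using S_Mtilde xi_Mtilde[OF m(2) uminus_Mtilde[OF m(1)]] by blast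
    then show "h' \<in> S_monoid P" using S_iff h inverse(2) by simp
  qed
  have "bij_betw (xi m Q) (S_monoid P) (S_monoid (P_mut P m Q))"
    by (rule bij_betw_byWitness[OF _ _ forward backward]) (simp_all add: inverse)
  then show ?thesis using inverse by blast
qed

end
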